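(* Let $\Gamma$ be a typing context and $A$ a type, both closed (containing no atomic types). If there is a term $t$ with $\Gamma\vdash t:A$, then either there is a closed term $\emptyset\vdash u:A$, or there is a term $\Gamma\vdash w:0$.
   Context: Types: $A,B ::= X \mid A\to B \mid A_1\times A_2 \mid 1 \mid A_1+A_2 \mid 0$ ($X$ atomic); a closed type contains no atomic type, and a closed context contains only closed types. Terms: $x \mid \lambda x.t \mid t\,u \mid (t_1,t_2) \mid \pi_i t \mid () \mid \sigma_i t \mid \mathtt{match}\ t\ \mathtt{with}\ (\sigma_1 x_1\to u_1 \mid \sigma_2 x_2\to u_2) \mid \mathtt{absurd}(t)$, with the standard simple typing rules of the simply-typed $\lambda$-calculus with functions, products, unit, binary sums and the empty type ($\mathtt{absurd}(t):A$ for any $A$ when $t:0$). *)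

theory Defs
  imports Main
begin

datatype ty = Atom nat | Arr ty ty | Prod ty ty | Unit | Sum ty ty | Empty

text \<open>Terms, with variables as de Bruijn indices (Curry-style, unannotated lambdas).
  Lam t binds index 0 in t; Match t u1 u2 binds index 0 in u1 and in u2.\<close>
datatype tm = Var nat | Lam tm | App tm tm | Pair tm tm | Proj1 tm | Proj2 tm | UnitT
  | Inj1 tm | Inj2 tm | Match tm tm tm | Absurd tm

inductive typing :: "ty list \<Rightarrow> tm \<Rightarrow> ty \<Rightarrow> bool" where
  T_Var: "i < length \<Gamma> \<Longrightarrow> \<Gamma> ! i = A \<Longrightarrow> typing \<Gamma> (Var i) A"
| T_Lam: "typing (A # \<Gamma>) t B \<Longrightarrow> typing \<Gamma> (Lam t) (Arr A B)"
| T_App: "typing \<Gamma> t (Arr A B) \<Longrightarrow> typing \<Gamma> u A \<Longrightarrow> typing \<Gamma> (App t u) B"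
| T_Pair: "typing \<Gamma> t1 A1 \<Longrightarrow> typing \<Gamma> t2 A2 \<Longrightarrow> typing \<Gamma> (Pair t1 t2) (Prod A1 A2)"
| T_Proj1: "typing \<Gamma> t (Prod A1 A2) \<Longrightarrow> typing \<Gamma> (Proj1 t) A1"
| T_Proj2: "typing \<Gamma> t (Prod A1 A2) \<Longrightarrow> typing \<Gamma> (Proj2 t) A2"
| T_Unit: "typing \<Gamma> UnitT Unit"
| T_Inj1: "typing \<Gamma> t A1 \<Longrightarrow> typing \<Gamma> (Inj1 t) (Sum A1 A2)"
| T_Inj2: "typing \<Gamma> t A2 \<Longrightarrow> typing \<Gamma> (Inj2 t) (Sum A1 A2)"
| T_Match: "typing \<Gamma> t (Sum A1 A2) \<Longrightarrow> typing (A1 # \<Gamma>) u1 C \<Longrightarrow> typing (A2 # \<Gamma>) u2 C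
             \<Longrightarrow> typing \<Gamma> (Match t u1 u2) C"
| T_Absurd: "typing \<Gamma> t Empty \<Longrightarrow> typing \<Gamma> (Absurd t) A"

fun closed_ty :: "ty \<Rightarrow> bool" where
  "closed_ty (Atom X) = False"
| "closed_ty (Arr A B) = (closed_ty A \<and> closed_ty B)"
| "closed_ty (Prod A B) = (closed_ty A \<and> closed_ty B)"
| "closed_ty Unit = True"
| "closed_ty (Sum A B) = (closed_ty A \<and> closed_ty B)"
| "closed_ty Empty = True"

definition closed_ctx :: "ty list \<Rightarrow> bool" where
  "closed_ctx \<Gamma> \<longleftrightarrow> (\<forall>A \<in> set \<Gamma>. closed_ty A)"

end

theory Submission
  imports Defs
begin

text \<open>A closed type is either inhabited by a closed term or refuted by a closed term of type
  \<open>A \<rightarrow> 0\<close>. In the second case the refutation applied to \<open>t\<close> is a term of type \<open>0\<close> in \<open>\<Gamma>\<close>.\<close>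

definition inhabited :: "ty \<Rightarrow> bool" where
  "inhabited A \<longleftrightarrow> (\<exists>u. typing [] u A)"

abbreviation refutable :: "ty \<Rightarrow> bool" where
  "refutable A \<equiv> inhabited (Arr A Empty)"

lemma typing_append_ctx: "typing \<Gamma> t A \<Longrightarrow> typing (\<Gamma> @ \<Delta>) t A"
  by (induction rule: typing.induct) (auto intro: typing.intros simp: nth_append)

lemma typing_closed_term: "typing [] t A \<Longrightarrow> typing \<Gamma> t A"
  using typing_append_ctx[of "[]" t A \<Gamma>] by simp

lemma inhabited_Unit: "inhabited Unit"
  unfolding inhabited_def by (auto intro: T_Unit)

lemma refutable_Empty: "refutable Empty"
proof -
  have "typing [] (Lam (Var 0)) (Arr Empty Empty)"
    by (auto intro!: typing.intros)
  then show ?thesis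
    unfolding inhabited_def by blast
qed

lemma inhabited_Arr_of_inhabited: "inhabited B \<Longrightarrow> inhabited (Arr A B)"
  unfolding inhabited_def by (auto intro: T_Lam typing_closed_term)

lemma inhabited_Arr_of_refutable:
  assumes "refutable A"
  shows "inhabited (Arr A B)"
proof -
  obtain f where "typing [] f (Arr A Empty)"
    using assms unfolding inhabited_def by blast
  then have "typing [A] f (Arr A Empty)"
    by (rule typing_closed_term)
  then have "typing [A] (Absurd (App f (Var 0))) B"
    by (auto intro!: typing.intros)
  then show ?thesis
    unfolding inhabited_def by (auto intro: T_Lam)
qed

lemma refutable_Arr:
  assumes "inhabited A" and "refutable B"
  shows "refutable (Arr A B)"
proof -
  obtain a f where "typing [] a A" and "typing [] f (Arr B Empty)"
    using assms unfolding inhabited_def by blast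
  then have "typing [Arr A B] a A" and "typing [Arr A B] f (Arr B Empty)"
    by (auto intro: typing_closed_term)
  then have "typing [Arr A B] (App f (App (Var 0) a)) Empty"
    by (auto intro!: typing.intros)
  then show ?thesis
    unfolding inhabited_def by (auto intro: T_Lam)
qed

lemma inhabited_Prod: "inhabited A \<Longrightarrow> inhabited B \<Longrightarrow> inhabited (Prod A B)"
  unfolding inhabited_def by (auto intro: T_Pair)

lemma refutable_Prod:
  assumes "refutable A \<or> refutable B"
  shows "refutable (Prod A B)"
  using assms
proof
  assume "refutable A"
  then obtain f where "typing [Prod A B] f (Arr A Empty)"
    unfolding inhabited_def by (auto intro: typing_closed_term)
  then have "typing [Prod A B] (App f (Proj1 (Var 0))) Empty"
    by (auto intro!: typing.intros)
  then show ?thesis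
    unfolding inhabited_def by (auto intro: T_Lam)
next
  assume "refutable B"
  then obtain g where "typing [Prod A B] g (Arr B Empty)"
    unfolding inhabited_def by (auto intro: typing_closed_term)
  then have "typing [Prod A B] (App g (Proj2 (Var 0))) Empty"
    by (auto intro!: typing.intros)
  then show ?thesis
    unfolding inhabited_def by (auto intro: T_Lam)
qed

lemma inhabited_Sum: "inhabited A \<or> inhabited B \<Longrightarrow> inhabited (Sum A B)"
  unfolding inhabited_def by (auto intro: T_Inj1 T_Inj2)

lemma refutable_Sum:
  assumes "refutable A" and "refutable B"
  shows "refutable (Sum A B)"
proof -
  obtain f g where "typing [] f (Arr A Empty)" and "typing [] g (Arr B Empty)"
    using assms unfolding inhabited_def by blast
  then have "typing [A, Sum A B] f (Arr A Empty)" and "typing [B, Sum A B] g (Arr B Empty)"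
    by (auto intro: typing_closed_term)
  then have "typing [Sum A B] (Match (Var 0) (App f (Var 0)) (App g (Var 0))) Empty"
    by (auto intro!: typing.intros)
  then show ?thesis
    unfolding inhabited_def by (auto intro: T_Lam)
qed

lemma closed_ty_inhabited_or_refutable: "closed_ty A \<Longrightarrow> inhabited A \<or> refutable A"
proof (induction A)
  case (Atom X)
  then show ?case by simp
next
  case (Arr A B)
  then show ?case
    using inhabited_Arr_of_inhabited inhabited_Arr_of_refutable refutable_Arr by auto
next
  case (Prod A B)
  then show ?case using inhabited_Prod refutable_Prod by auto
next
  case Unit
  then show ?case using inhabited_Unit by simp
next
  case (Sum A B)
  then show ?case using inhabited_Sum refutable_Sum by auto
next
  case Empty
  then show ?case using refutable_Empty by simp
qed

theorem mainTheorem8: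
  assumes "closed_ctx \<Gamma>" and "closed_ty A" and "typing \<Gamma> t A"
  shows "(\<exists>u. typing [] u A) \<or> (\<exists>w. typing \<Gamma> w Empty)"
proof (cases "inhabited A")
  case True
  then show ?thesis unfolding inhabited_def by blast
next
  case False
  then obtain f where "typing [] f (Arr A Empty)"
    using closed_ty_inhabited_or_refutable[OF assms(2)] unfolding inhabited_def by blast
  then have "typing \<Gamma> (App f t) Empty"
    using assms(3) by (auto intro: T_App typing_closed_term)
  then show ?thesis by blast
qed

end
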